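(* Let $n\ge 2$ and let $NF_n$ be the complex Leibniz algebra with basis $\{e_1,\dots,e_n\}$ and nonzero products $[e_i,e_1]=e_{i+1}$, $1\le i\le n-1$. Then $\mathrm{Bider}(NF_n)$, with the bracket $[(d,D),(d',D')]=(d\circ d'-d'\circ d,\ D\circ d'-d'\circ D)$, is a solvable Leibniz algebra of dimension $2n-1$.
   Context: All algebras are over $\mathbb C$; Leibniz algebras are right Leibniz: $[x,[y,z]]=[[x,y],z]-[[x,z],y]$. A derivation is a linear map $d$ with $d([x,y])=[d(x),y]+[x,d(y)]$; an anti-derivation is a linear map $D$ with $D([x,y])=[D(x),y]-[D(y),x]$; a biderivation is a pair $(d,D)$ of a derivation and an anti-derivation with $[x,d(y)]=[x,D(y)]$ for all $x,y$. $\mathrm{Bider}(L)$ is the vector space of all biderivations of $L$. A Leibniz algebra $A$ is solvable if the derived series $A^{[1]}=A$, $A^{[s+1]}=[A^{[s]},A^{[s]}]$ reaches $0$. *)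

theory Defs
  imports Complex_Main "HOL-Library.Function_Algebras" "HOL-Library.Product_Plus"
begin

definition leibniz_algebra_on ::
  "('k::field \<Rightarrow> 'v::ab_group_add \<Rightarrow> 'v) \<Rightarrow> ('v \<Rightarrow> 'v \<Rightarrow> 'v) \<Rightarrow> 'v set \<Rightarrow> bool" where
  "leibniz_algebra_on s br A \<longleftrightarrow>
     vector_space s \<and> module.subspace s A \<and>
     (\<forall>x\<in>A. \<forall>y\<in>A. br x y \<in> A) \<and>
     (\<forall>x\<in>A. \<forall>y\<in>A. \<forall>z\<in>A. br (x + y) z = br x z + br y z \<and> br z (x + y) = br z x + br z y) \<and>
     (\<forall>c. \<forall>x\<in>A. \<forall>y\<in>A. br (s c x) y = s c (br x y) \<and> br x (s c y) = s c (br x y)) \<and>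
     (\<forall>x\<in>A. \<forall>y\<in>A. \<forall>z\<in>A. br x (br y z) = br (br x y) z - br (br x z) y)"

text \<open>Derived series: index 0 here is A^[1] = A of the paper;
  A^[s+1] = [A^[s],A^[s]] (the linear span of all brackets).\<close>

fun derived_series ::
  "('k::field \<Rightarrow> 'v::ab_group_add \<Rightarrow> 'v) \<Rightarrow> ('v \<Rightarrow> 'v \<Rightarrow> 'v) \<Rightarrow> 'v set \<Rightarrow> nat \<Rightarrow> 'v set" where
  "derived_series s br A 0 = A"
| "derived_series s br A (Suc k) =
     module.span s {br x y | x y. x \<in> derived_series s br A k \<and> y \<in> derived_series s br A k}"

definition solvable_on ::
  "('k::field \<Rightarrow> 'v::ab_group_add \<Rightarrow> 'v) \<Rightarrow> ('v \<Rightarrow> 'v \<Rightarrow> 'v) \<Rightarrow> 'v set \<Rightarrow> bool" where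
  "solvable_on s br A \<longleftrightarrow> (\<exists>k. derived_series s br A k = {0})"

text \<open>Vectors of C^n are functions nat => complex vanishing at indices \<ge> n;
  the basis vector e_(i+1) of the paper is the i-th unit vector (0-indexed).
  Linear endomorphisms of C^n are represented by n x n matrices
  (functions nat => nat => complex vanishing outside {0..<n} x {0..<n}).\<close>

type_synonym cmat = "nat \<Rightarrow> nat \<Rightarrow> complex"

definition vecs :: "nat \<Rightarrow> (nat \<Rightarrow> complex) set" where
  "vecs n = {v. \<forall>i\<ge>n. v i = 0}"

definition unitv :: "nat \<Rightarrow> nat \<Rightarrow> complex" where
  "unitv i = (\<lambda>k. if k = i then 1 else 0)"

definition is_mat :: "nat \<Rightarrow> cmat \<Rightarrow> bool" where
  "is_mat n A \<longleftrightarrow> (\<forall>i j. n \<le> i \<or> n \<le> j \<longrightarrow> A i j = 0)"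

definition mat_app :: "nat \<Rightarrow> cmat \<Rightarrow> (nat \<Rightarrow> complex) \<Rightarrow> (nat \<Rightarrow> complex)" where
  "mat_app n A v = (\<lambda>i. \<Sum>j<n. A i j * v j)"

definition mat_comp :: "nat \<Rightarrow> cmat \<Rightarrow> cmat \<Rightarrow> cmat" where
  "mat_comp n A B = (\<lambda>i j. \<Sum>k<n. A i k * B k j)"

definition nf_basis_br :: "nat \<Rightarrow> nat \<Rightarrow> nat \<Rightarrow> (nat \<Rightarrow> complex)" where
  "nf_basis_br n i j = (if j = 0 \<and> i + 1 < n then unitv (i + 1) else 0)"

definition nf_br :: "nat \<Rightarrow> (nat \<Rightarrow> complex) \<Rightarrow> (nat \<Rightarrow> complex) \<Rightarrow> (nat \<Rightarrow> complex)" where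
  "nf_br n x y = (\<Sum>i<n. \<Sum>j<n. (\<lambda>k. x i * y j * nf_basis_br n i j k))"

definition is_derivation :: "nat \<Rightarrow> cmat \<Rightarrow> bool" where
  "is_derivation n d \<longleftrightarrow> is_mat n d \<and>
     (\<forall>x\<in>vecs n. \<forall>y\<in>vecs n.
        mat_app n d (nf_br n x y) = nf_br n (mat_app n d x) y + nf_br n x (mat_app n d y))"

definition is_antiderivation :: "nat \<Rightarrow> cmat \<Rightarrow> bool" where
  "is_antiderivation n D \<longleftrightarrow> is_mat n D \<and>
     (\<forall>x\<in>vecs n. \<forall>y\<in>vecs n.
        mat_app n D (nf_br n x y) = nf_br n (mat_app n D x) y - nf_br n (mat_app n D y) x)"

definition Bider :: "nat \<Rightarrow> (cmat \<times> cmat) set" where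
  "Bider n = {(d, D). is_derivation n d \<and> is_antiderivation n D \<and>
     (\<forall>x\<in>vecs n. \<forall>y\<in>vecs n. nf_br n x (mat_app n d y) = nf_br n x (mat_app n D y))}"

definition pscale :: "complex \<Rightarrow> cmat \<times> cmat \<Rightarrow> cmat \<times> cmat" where
  "pscale c p = (\<lambda>i j. c * fst p i j, \<lambda>i j. c * snd p i j)"

definition bider_br :: "nat \<Rightarrow> cmat \<times> cmat \<Rightarrow> cmat \<times> cmat \<Rightarrow> cmat \<times> cmat" where
  "bider_br n p q =
     (mat_comp n (fst p) (fst q) - mat_comp n (fst q) (fst p),
      mat_comp n (snd p) (fst q) - mat_comp n (fst q) (snd p))"

end

theory Submission
  imports Defs
begin

text \<open>Evaluating the derivation identity on the pairs \<open>(e\<^sub>k, e\<^sub>1)\<close> shows that a derivation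
  \<open>d\<close> of \<open>NF\<^sub>n\<close> is determined by \<open>c = d(e\<^sub>1)\<close>: below the diagonal it is the Toeplitz matrix
  of \<open>c\<close>, and its diagonal entries are \<open>c\<^sub>1, 2c\<^sub>1, \<dots>, nc\<^sub>1\<close>.  The same computation shows
  that an anti-derivation \<open>D\<close> vanishes on \<open>e\<^sub>2, \<dots>, e\<^sub>n\<close>, and the compatibility condition
  says exactly that \<open>d(e\<^sub>1)\<close> and \<open>D(e\<^sub>1)\<close> have the same first coordinate.  So a biderivation
  is given by \<open>2n - 1\<close> free parameters.  Brackets cancel the diagonal part of \<open>d\<close>, so the first
  components in the derived algebra are strictly lower triangular Toeplitz matrices; these
  commute, hence the second derived algebra consists of pairs \<open>(0, D)\<close>, whose brackets vanish.\<close>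

lemma derived_series_Suc_subset:
  assumes "module s" "module.subspace s W"
    and "\<And>x y. x \<in> derived_series s br A k \<Longrightarrow> y \<in> derived_series s br A k \<Longrightarrow> br x y \<in> W"
  shows "derived_series s br A (Suc k) \<subseteq> W"
proof -
  have "module.span s {br x y |x y. x \<in> derived_series s br A k \<and> y \<in> derived_series s br A k} \<subseteq> W"
    using assms by (intro module.span_minimal) auto
  then show ?thesis by simp
qed

context vector_space
begin

lemma dim_eq_card_if_biorthogonal:
  assumes S: "subspace S" and I: "finite I" and g: "g ` I \<subseteq> S"
    and hom: "\<And>s. s \<in> I \<Longrightarrow> module_hom scale (*) (\<phi> s)"
    and dual: "\<And>s t. s \<in> I \<Longrightarrow> t \<in> I \<Longrightarrow> \<phi> s (g t) = (if s = t then 1 else 0)"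
    and separating: "\<And>p. p \<in> S \<Longrightarrow> (\<And>s. s \<in> I \<Longrightarrow> \<phi> s p = 0) \<Longrightarrow> p = 0"
  shows "dim S = card I"
proof -
  have inj: "inj_on g I"
    by (rule inj_onI) (metis dual one_neq_zero)
  have coeff: "\<phi> s (\<Sum>t\<in>I. f t *s g t) = f s" if "s \<in> I" for s f
  proof -
    interpret module_hom scale "(*)" "\<phi> s"
      using hom[OF that] .
    have "\<phi> s (\<Sum>t\<in>I. f t *s g t) = (\<Sum>t\<in>I. f t * (if s = t then 1 else 0))"
      using that by (simp add: sum scale dual)
    also have "\<dots> = f s"
      using that I by (simp add: if_distrib cong: if_cong)
    finally show ?thesis .
  qed
  have "independent (g ` I)"
  proof (rule independent_if_scalars_zero)
    fix f x
    assume "(\<Sum>x\<in>g ` I. f x *s x) = 0" and "x \<in> g ` I"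
    then obtain s where "s \<in> I" "x = g s" and "(\<Sum>t\<in>I. f (g t) *s g t) = 0"
      by (auto simp: sum.reindex[OF inj])
    then show "f x = 0"
      using coeff[of s "f \<circ> g"] hom module_hom.zero by fastforce
  qed (use I in simp)
  moreover have "S \<subseteq> span (g ` I)"
  proof
    fix p assume p: "p \<in> S"
    let ?q = "p - (\<Sum>t\<in>I. \<phi> t p *s g t)"
    have "?q \<in> S"
      using S p g by (intro subspace_diff subspace_sum subspace_scale) auto
    moreover have "\<phi> s ?q = 0" if "s \<in> I" for s
      using coeff[OF that] module_hom.diff[OF hom[OF that]] by simp
    ultimately have "?q = 0"
      by (rule separating)
    then have "p = (\<Sum>t\<in>I. \<phi> t p *s g t)"
      by simp
    also have "\<dots> \<in> span (g ` I)"
      by (intro span_sum span_scale span_base) simp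
    finally show "p \<in> span (g ` I)" .
  qed
  ultimately show ?thesis
    using dim_unique[OF g] card_image[OF inj] by simp
qed

end

lemma sum_fun_apply: "(sum f A) x = (\<Sum>a\<in>A. f a x)"
  by (induction A rule: infinite_finite_induct) auto

lemma nf_br_eq:
  assumes "0 < n"
  shows "nf_br n x y = (\<lambda>k. if 0 < k \<and> k < n then x (k - 1) * y 0 else 0)"
proof
  fix k
  have "nf_br n x y k = (\<Sum>i<n. \<Sum>j<n. x i * y j * nf_basis_br n i j k)"
    by (simp add: nf_br_def sum_fun_apply)
  also have "\<dots> = (\<Sum>i<n. if i = k - 1 \<and> 0 < k \<and> k < n then x i * y 0 else 0)"
  proof -
    have basis: "\<And>i j. nf_basis_br n i j k = (if j = 0 \<and> i + 1 < n \<and> k = i + 1 then 1 else 0)"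
      by (simp add: nf_basis_br_def unitv_def)
    show ?thesis
      using assms by (intro sum.cong refl) (auto simp: basis if_distrib cong: if_cong intro!: sum.neutral)
  qed
  also have "\<dots> = (if 0 < k \<and> k < n then x (k - 1) * y 0 else 0)"
    by (auto simp: sum.delta)
  finally show "nf_br n x y k = \<dots>" .
qed

lemma nf_br_unitv: "Suc k < n \<Longrightarrow> nf_br n (unitv k) (unitv 0) = unitv (Suc k)"
  by (auto simp: nf_br_eq unitv_def fun_eq_iff)

lemma nf_br_cong_right: "0 < n \<Longrightarrow> u 0 = v 0 \<Longrightarrow> nf_br n x u = nf_br n x v"
  by (simp add: nf_br_eq fun_eq_iff)

lemma nf_br_diff_left: "0 < n \<Longrightarrow> nf_br n (a - b) y = nf_br n a y - nf_br n b y"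
  by (simp add: nf_br_eq fun_eq_iff algebra_simps)

lemma nf_br_diff_right: "0 < n \<Longrightarrow> nf_br n x (a - b) = nf_br n x a - nf_br n x b"
  by (simp add: nf_br_eq fun_eq_iff algebra_simps)

lemma unitv_vecs: "j < n \<Longrightarrow> unitv j \<in> vecs n"
  by (auto simp: vecs_def unitv_def)

lemma mat_app_unitv: "j < n \<Longrightarrow> mat_app n d (unitv j) = (\<lambda>i. d i j)"
  by (auto simp: mat_app_def unitv_def if_distrib cong: if_cong)

lemma mat_app_vecs: "is_mat n A \<Longrightarrow> mat_app n A v \<in> vecs n"
  by (simp add: vecs_def is_mat_def mat_app_def)

lemma mat_app_add: "mat_app n A (u + v) = mat_app n A u + mat_app n A v"
  by (simp add: mat_app_def fun_eq_iff algebra_simps sum.distrib)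

lemma mat_app_diff: "mat_app n A (u - v) = mat_app n A u - mat_app n A v"
  by (simp add: mat_app_def fun_eq_iff algebra_simps sum_subtractf)

lemma mat_app_diff_mat: "mat_app n (A - B) v = mat_app n A v - mat_app n B v"
  by (simp add: mat_app_def fun_eq_iff algebra_simps sum_subtractf)

lemma mat_app_comp: "mat_app n (mat_comp n A B) v = mat_app n A (mat_app n B v)"
proof
  fix i
  have "mat_app n (mat_comp n A B) v i = (\<Sum>k<n. \<Sum>l<n. A i l * B l k * v k)"
    by (simp add: mat_comp_def mat_app_def sum_distrib_right)
  also have "\<dots> = (\<Sum>l<n. \<Sum>k<n. A i l * B l k * v k)"
    by (rule sum.swap)
  also have "\<dots> = mat_app n A (mat_app n B v) i"
    by (simp add: mat_app_def sum_distrib_left mult.assoc)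
  finally show "mat_app n (mat_comp n A B) v i = mat_app n A (mat_app n B v) i" .
qed

lemma mat_comp_assoc: "mat_comp n (mat_comp n A B) C = mat_comp n A (mat_comp n B C)"
proof (intro ext)
  fix i j
  have "mat_comp n (mat_comp n A B) C i j = (\<Sum>k<n. \<Sum>l<n. A i l * B l k * C k j)"
    by (simp add: mat_comp_def sum_distrib_right)
  also have "\<dots> = (\<Sum>l<n. \<Sum>k<n. A i l * B l k * C k j)"
    by (rule sum.swap)
  also have "\<dots> = mat_comp n A (mat_comp n B C) i j"
    by (simp add: mat_comp_def sum_distrib_left mult.assoc)
  finally show "mat_comp n (mat_comp n A B) C i j = mat_comp n A (mat_comp n B C) i j" .
qed

lemma mat_comp_add_left: "mat_comp n (A + B) C = mat_comp n A C + mat_comp n B C"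
  by (simp add: mat_comp_def fun_eq_iff algebra_simps sum.distrib)

lemma mat_comp_add_right: "mat_comp n A (B + C) = mat_comp n A B + mat_comp n A C"
  by (simp add: mat_comp_def fun_eq_iff algebra_simps sum.distrib)

lemma mat_comp_diff_left: "mat_comp n (A - B) C = mat_comp n A C - mat_comp n B C"
  by (simp add: mat_comp_def fun_eq_iff algebra_simps sum_subtractf)

lemma mat_comp_diff_right: "mat_comp n A (B - C) = mat_comp n A B - mat_comp n A C"
  by (simp add: mat_comp_def fun_eq_iff algebra_simps sum_subtractf)

lemma mat_comp_scale_left: "mat_comp n (\<lambda>i j. c * A i j) B = (\<lambda>i j. c * mat_comp n A B i j)"
  by (simp add: mat_comp_def fun_eq_iff sum_distrib_left mult.assoc)

lemma mat_comp_scale_right: "mat_comp n A (\<lambda>i j. c * B i j) = (\<lambda>i j. c * mat_comp n A B i j)"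
  by (simp add: mat_comp_def fun_eq_iff sum_distrib_left algebra_simps)

lemma is_mat_commutator: "is_mat n A \<Longrightarrow> is_mat n B \<Longrightarrow> is_mat n (mat_comp n A B - mat_comp n B A)"
  by (simp add: is_mat_def mat_comp_def)

definition der_mat :: "nat \<Rightarrow> (nat \<Rightarrow> complex) \<Rightarrow> cmat" where
  "der_mat n c = (\<lambda>i j. if j < i \<and> i < n then c (i - j)
                         else if i = j \<and> i < n then of_nat (Suc j) * c 0 else 0)"

definition antider_mat :: "nat \<Rightarrow> (nat \<Rightarrow> complex) \<Rightarrow> cmat" where
  "antider_mat n b = (\<lambda>i j. if j = 0 \<and> i < n then b i else 0)"

lemma der_mat_col0: "i < n \<Longrightarrow> der_mat n c i 0 = c i"
  by (simp add: der_mat_def)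

lemma antider_mat_col0: "i < n \<Longrightarrow> antider_mat n b i 0 = b i"
  by (simp add: antider_mat_def)

lemma derivation_Suc_col:
  assumes "is_derivation n d" "Suc k < n"
  shows "d i (Suc k) = (if 0 < i \<and> i < n then d (i - 1) k + (if i - 1 = k then d 0 0 else 0) else 0)"
proof -
  have "mat_app n d (nf_br n (unitv k) (unitv 0)) =
        nf_br n (mat_app n d (unitv k)) (unitv 0) + nf_br n (unitv k) (mat_app n d (unitv 0))"
    using assms unitv_vecs[of k n] unitv_vecs[of 0 n] by (simp add: is_derivation_def)
  then have "d i (Suc k) = (nf_br n (mat_app n d (unitv k)) (unitv 0) + nf_br n (unitv k) (mat_app n d (unitv 0))) i"
    using assms(2) by (simp add: nf_br_unitv mat_app_unitv fun_eq_iff)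
  then show ?thesis
    using assms(2) by (simp add: nf_br_eq mat_app_unitv) (simp add: unitv_def)
qed

lemma der_mat_Suc_col:
  assumes "Suc k < n"
  shows "der_mat n c i (Suc k) =
    (if 0 < i \<and> i < n then der_mat n c (i - 1) k + (if i - 1 = k then c 0 else 0) else 0)"
proof (cases "0 < i \<and> i < n")
  case True
  then consider "Suc k < i" | "Suc k = i" | "i < Suc k" by linarith
  then show ?thesis
    by cases (use True assms in \<open>auto simp: der_mat_def Suc_diff_Suc algebra_simps\<close>)
qed (auto simp: der_mat_def)

lemma derivation_eq_der_mat:
  assumes "is_derivation n d"
  shows "d = der_mat n (\<lambda>i. d i 0)"
proof -
  have mat: "is_mat n d"
    using assms by (simp add: is_derivation_def)
  have "\<forall>i. d i j = der_mat n (\<lambda>i. d i 0) i j" for j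
  proof (induction j)
    case 0
    show ?case using mat by (auto simp: der_mat_def is_mat_def)
  next
    case (Suc k)
    show ?case
    proof (cases "Suc k < n")
      case True
      then show ?thesis
        using Suc.IH by (simp add: derivation_Suc_col[OF assms True] der_mat_Suc_col[OF True])
    qed (use mat in \<open>auto simp: der_mat_def is_mat_def\<close>)
  qed
  then show ?thesis by (intro ext) blast
qed

lemma der_mat_app_0:
  assumes "0 < n"
  shows "mat_app n (der_mat n c) v 0 = c 0 * v 0"
proof -
  have "der_mat n c 0 j * v j = (if j = 0 then c 0 * v 0 else 0)" for j
    using assms by (simp add: der_mat_def)
  then show ?thesis using assms by (simp add: mat_app_def)
qed

lemma der_mat_app_nf_br:
  assumes "0 < n"
  shows "mat_app n (der_mat n c) (nf_br n x y) i =
    (if 0 < i \<and> i < n then (mat_app n (der_mat n c) x (i - 1) + c 0 * x (i - 1)) * y 0 else 0)"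
proof -
  obtain m where n: "n = Suc m" using assms by (cases n) auto
  let ?d = "der_mat n c"
  have "mat_app n ?d (nf_br n x y) i = (\<Sum>k<m. ?d i (Suc k) * x k) * y 0"
    unfolding mat_app_def nf_br_eq[OF assms] n sum.lessThan_Suc_shift
    by (simp add: nf_br_eq sum_distrib_right mult.assoc)
  also have "\<dots> = (if 0 < i \<and> i < n then (\<Sum>k<m. ?d (i - 1) k * x k) * y 0 + c 0 * x (i - 1) * y 0 else 0)"
  proof (cases "0 < i \<and> i < n")
    case True
    have "?d i (Suc k) * x k = ?d (i - 1) k * x k + (if k = i - 1 then c 0 * x (i - 1) else 0)"
      if "k < m" for k
      using that True by (simp add: der_mat_Suc_col n algebra_simps)
    then have "(\<Sum>k<m. ?d i (Suc k) * x k) = (\<Sum>k<m. ?d (i - 1) k * x k) + c 0 * x (i - 1)"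
      using True n by (simp add: sum.distrib) linarith
    then show ?thesis
      using True by (simp add: algebra_simps)
  next
    case False
    then have "?d i (Suc k) = 0" for k
      by (auto simp: der_mat_def)
    then show ?thesis
      using False by auto
  qed
  also have "\<dots> = (if 0 < i \<and> i < n then (mat_app n ?d x (i - 1) + c 0 * x (i - 1)) * y 0 else 0)"
  proof -
    have "?d (i - 1) m = 0" if "0 < i" "i < n"
      using that n by (auto simp: der_mat_def)
    then show ?thesis
      by (simp add: mat_app_def n algebra_simps)
  qed
  finally show ?thesis .
qed

lemma is_derivation_der_mat: "0 < n \<Longrightarrow> is_derivation n (der_mat n c)"
  unfolding is_derivation_def
proof (intro conjI ballI ext)
  show "is_mat n (der_mat n c)"
    by (simp add: is_mat_def der_mat_def)
qed (simp add: der_mat_app_nf_br, simp add: nf_br_eq der_mat_app_0 algebra_simps)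

lemma antiderivation_Suc_col:
  assumes "is_antiderivation n D" "Suc k < n"
  shows "D i (Suc k) = (if 0 < i \<and> i < n then D (i - 1) k - (if k = 0 then D (i - 1) 0 else 0) else 0)"
proof -
  have "mat_app n D (nf_br n (unitv k) (unitv 0)) =
        nf_br n (mat_app n D (unitv k)) (unitv 0) - nf_br n (mat_app n D (unitv 0)) (unitv k)"
    using assms unitv_vecs[of k n] unitv_vecs[of 0 n] by (simp add: is_antiderivation_def)
  then have "D i (Suc k) = (nf_br n (mat_app n D (unitv k)) (unitv 0) - nf_br n (mat_app n D (unitv 0)) (unitv k)) i"
    using assms(2) by (simp add: nf_br_unitv mat_app_unitv fun_eq_iff)
  then show ?thesis
    using assms(2) by (simp add: nf_br_eq mat_app_unitv) (simp add: unitv_def)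
qed

lemma antiderivation_eq_antider_mat:
  assumes "is_antiderivation n D"
  shows "D = antider_mat n (\<lambda>i. D i 0)"
proof -
  have mat: "is_mat n D"
    using assms by (simp add: is_antiderivation_def)
  have "\<forall>i. D i (Suc k) = 0" for k
  proof (induction k)
    case 0
    show ?case
      using mat antiderivation_Suc_col[OF assms, of 0] by (cases "Suc 0 < n") (auto simp: is_mat_def)
  next
    case (Suc k)
    show ?case
      using mat Suc.IH antiderivation_Suc_col[OF assms, of "Suc k"]
      by (cases "Suc (Suc k) < n") (auto simp: is_mat_def)
  qed
  then show ?thesis
    using mat by (auto simp: antider_mat_def is_mat_def fun_eq_iff gr0_conv_Suc)
qed

lemma antider_mat_app: "mat_app n (antider_mat n b) v = (\<lambda>i. if i < n then b i * v 0 else 0)"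
proof
  fix i
  have "antider_mat n b i j * v j = (if j = 0 then (if i < n then b i * v 0 else 0) else 0)" for j
    by (simp add: antider_mat_def)
  then show "mat_app n (antider_mat n b) v i = (if i < n then b i * v 0 else 0)"
    by (simp add: mat_app_def)
qed

lemma is_antiderivation_antider_mat: "0 < n \<Longrightarrow> is_antiderivation n (antider_mat n b)"
  unfolding is_antiderivation_def
proof (intro conjI ballI ext)
  show "is_mat n (antider_mat n b)"
    by (simp add: is_mat_def antider_mat_def)
qed (simp add: antider_mat_app, auto simp: nf_br_eq)

lemma bider_diag_eq:
  assumes "(d, D) \<in> Bider n" "2 \<le> n"
  shows "d 0 0 = D 0 0"
proof -
  have "nf_br n (unitv 0) (mat_app n d (unitv 0)) 1 = nf_br n (unitv 0) (mat_app n D (unitv 0)) 1"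
    using assms unitv_vecs[of 0 n] by (simp add: Bider_def)
  then show ?thesis
    using assms(2) by (simp add: nf_br_eq mat_app_unitv) (simp add: unitv_def)
qed

lemma Bider_eq:
  assumes "2 \<le> n"
  shows "Bider n = {(der_mat n c, antider_mat n b) | c b. b 0 = c 0}"
proof (intro equalityI subsetI)
  fix p assume p: "p \<in> Bider n"
  then obtain d D where pd: "p = (d, D)" "is_derivation n d" "is_antiderivation n D"
    by (auto simp: Bider_def)
  then have "d 0 0 = D 0 0"
    using bider_diag_eq p assms by blast
  then show "p \<in> {(der_mat n c, antider_mat n b) | c b. b 0 = c 0}"
    using pd derivation_eq_der_mat antiderivation_eq_antider_mat by fastforce
next
  fix p assume "p \<in> {(der_mat n c, antider_mat n b) | c b. b 0 = c 0}"
  then obtain c b where p: "p = (der_mat n c, antider_mat n b)" and bc: "b 0 = c 0"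
    by blast
  have n0: "0 < n"
    using assms by simp
  have "nf_br n x (mat_app n (der_mat n c) y) = nf_br n x (mat_app n (antider_mat n b) y)" for x y
    using n0 bc by (intro nf_br_cong_right) (simp_all add: der_mat_app_0 antider_mat_app)
  then show "p \<in> Bider n"
    using n0 by (simp add: p Bider_def is_derivation_der_mat is_antiderivation_antider_mat)
qed

lemma derivation_commutator:
  assumes d: "is_derivation n d" and e: "is_derivation n e" and n: "0 < n"
  shows "is_derivation n (mat_comp n d e - mat_comp n e d)"
  unfolding is_derivation_def
proof (intro conjI ballI)
  have "is_mat n d" "is_mat n e"
    using d e by (auto simp: is_derivation_def)
  then show "is_mat n (mat_comp n d e - mat_comp n e d)"
    by (rule is_mat_commutator)
  from \<open>is_mat n d\<close> \<open>is_mat n e\<close> have vecs: "mat_app n d v \<in> vecs n" "mat_app n e v \<in> vecs n" for v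
    by (auto intro: mat_app_vecs)
  fix x y assume "x \<in> vecs n" "y \<in> vecs n"
  with d e vecs n show "mat_app n (mat_comp n d e - mat_comp n e d) (nf_br n x y) =
      nf_br n (mat_app n (mat_comp n d e - mat_comp n e d) x) y
    + nf_br n x (mat_app n (mat_comp n d e - mat_comp n e d) y)"
    by (simp add: is_derivation_def mat_app_diff_mat mat_app_comp mat_app_add
        nf_br_diff_left nf_br_diff_right)
qed

lemma antiderivation_commutator:
  assumes D: "is_antiderivation n D" and e: "is_derivation n e" and n: "0 < n"
  shows "is_antiderivation n (mat_comp n D e - mat_comp n e D)"
  unfolding is_antiderivation_def
proof (intro conjI ballI)
  have "is_mat n D" "is_mat n e"
    using D e by (auto simp: is_derivation_def is_antiderivation_def)
  then show "is_mat n (mat_comp n D e - mat_comp n e D)"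
    by (rule is_mat_commutator)
  from \<open>is_mat n D\<close> \<open>is_mat n e\<close> have vecs: "mat_app n D v \<in> vecs n" "mat_app n e v \<in> vecs n" for v
    by (auto intro: mat_app_vecs)
  fix x y assume "x \<in> vecs n" "y \<in> vecs n"
  with D e vecs n show "mat_app n (mat_comp n D e - mat_comp n e D) (nf_br n x y) =
      nf_br n (mat_app n (mat_comp n D e - mat_comp n e D) x) y
    - nf_br n (mat_app n (mat_comp n D e - mat_comp n e D) y) x"
    by (simp add: is_derivation_def is_antiderivation_def mat_app_diff_mat mat_app_comp
        mat_app_add mat_app_diff nf_br_diff_left nf_br_diff_right)
qed

lemma bider_br_closed:
  assumes p: "p \<in> Bider n" and q: "q \<in> Bider n" and n: "0 < n"
  shows "bider_br n p q \<in> Bider n"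
proof -
  obtain d D e E where pq: "p = (d, D)" "q = (e, E)"
    by fastforce
  have d: "is_derivation n d" and D: "is_antiderivation n D" and e: "is_derivation n e"
    and compat: "\<And>x y. x \<in> vecs n \<Longrightarrow> y \<in> vecs n \<Longrightarrow> nf_br n x (mat_app n d y) = nf_br n x (mat_app n D y)"
    using p q pq by (auto simp: Bider_def)
  have vecs: "mat_app n A v \<in> vecs n" if "A \<in> {d, D, e}" for A v
    using that d D e by (auto intro: mat_app_vecs simp: is_derivation_def is_antiderivation_def)
  have e_br: "mat_app n e (nf_br n u v) = nf_br n (mat_app n e u) v + nf_br n u (mat_app n e v)"
    if "u \<in> vecs n" "v \<in> vecs n" for u v
    using e that by (simp add: is_derivation_def)
  have "nf_br n x (mat_app n (mat_comp n d e - mat_comp n e d) y) =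
        nf_br n x (mat_app n (mat_comp n D e - mat_comp n e D) y)"
    if x: "x \<in> vecs n" and y: "y \<in> vecs n" for x y
  proof -
    have "nf_br n x (mat_app n e (mat_app n d y)) =
          mat_app n e (nf_br n x (mat_app n d y)) - nf_br n (mat_app n e x) (mat_app n d y)"
      using e_br[OF x vecs] by simp
    also have "\<dots> = mat_app n e (nf_br n x (mat_app n D y)) - nf_br n (mat_app n e x) (mat_app n D y)"
      using compat x y vecs by simp
    also have "\<dots> = nf_br n x (mat_app n e (mat_app n D y))"
      using e_br[OF x vecs] by simp
    finally show ?thesis
      using compat x vecs n by (simp add: mat_app_diff_mat mat_app_comp nf_br_diff_right)
  qed
  then show ?thesis
    using derivation_commutator[OF d e n] antiderivation_commutator[OF D e n]
    by (simp add: pq bider_br_def Bider_def)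
qed

lemma vector_space_pscale: "vector_space pscale"
  by unfold_locales (auto simp: pscale_def algebra_simps fun_eq_iff prod_eq_iff)

interpretation V: vector_space pscale
  by (rule vector_space_pscale)

lemma der_mat_add: "der_mat n c + der_mat n c' = der_mat n (c + c')"
  by (simp add: der_mat_def fun_eq_iff algebra_simps)

lemma antider_mat_add: "antider_mat n b + antider_mat n b' = antider_mat n (b + b')"
  by (simp add: antider_mat_def fun_eq_iff)

lemma pscale_mats:
  "pscale r (der_mat n c, antider_mat n b) = (der_mat n (\<lambda>i. r * c i), antider_mat n (\<lambda>i. r * b i))"
  by (simp add: pscale_def der_mat_def antider_mat_def fun_eq_iff)

lemma Bider_subspace:
  assumes "2 \<le> n"
  shows "V.subspace (Bider n)"
  unfolding V.subspace_def Bider_eq[OF assms]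
proof (intro conjI ballI allI)
  have "(0 :: cmat \<times> cmat) = (der_mat n 0, antider_mat n 0)"
    by (simp add: der_mat_def antider_mat_def fun_eq_iff zero_prod_def)
  then show "0 \<in> {(der_mat n c, antider_mat n b) |c b. b 0 = c 0}"
    by force
qed (force simp: der_mat_add antider_mat_add pscale_mats)+

lemma leibniz_algebra_Bider:
  assumes "2 \<le> n"
  shows "leibniz_algebra_on pscale (bider_br n) (Bider n)"
  unfolding leibniz_algebra_on_def
proof (intro conjI ballI allI vector_space_pscale Bider_subspace[OF assms])
  fix x y z :: "cmat \<times> cmat"
  assume "x \<in> Bider n" "y \<in> Bider n"
  then show "bider_br n x y \<in> Bider n"
    using assms by (simp add: bider_br_closed)
  show "bider_br n (x + y) z = bider_br n x z + bider_br n y z"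
    "bider_br n z (x + y) = bider_br n z x + bider_br n z y"
    by (simp_all add: bider_br_def mat_comp_add_left mat_comp_add_right)
  show "bider_br n x (bider_br n y z) = bider_br n (bider_br n x y) z - bider_br n (bider_br n x z) y"
    by (simp add: bider_br_def mat_comp_diff_left mat_comp_diff_right mat_comp_assoc algebra_simps)
  fix c :: complex
  show "bider_br n (pscale c x) y = pscale c (bider_br n x y)"
    "bider_br n x (pscale c y) = pscale c (bider_br n x y)"
    by (simp_all add: bider_br_def pscale_def mat_comp_scale_left mat_comp_scale_right fun_eq_iff algebra_simps)
qed

lemma mat_comp_der_mat_0_0: "0 < n \<Longrightarrow> mat_comp n (der_mat n c) A 0 0 = c 0 * A 0 0"
proof -
  assume n: "0 < n"
  have "der_mat n c 0 k * A k 0 = (if k = 0 then c 0 * A 0 0 else 0)" for k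
    using n by (simp add: der_mat_def)
  then show ?thesis
    using n by (simp add: mat_comp_def)
qed

lemma mat_comp_der_mat:
  assumes "c 0 = 0" "c' 0 = 0"
  shows "mat_comp n (der_mat n c) (der_mat n c') i j =
    (if i < n then \<Sum>k\<in>{j<..<i}. c (i - k) * c' (k - j) else 0)"
proof (cases "i < n")
  case True
  have "mat_comp n (der_mat n c) (der_mat n c') i j =
      (\<Sum>k<n. if k \<in> {j<..<i} then c (i - k) * c' (k - j) else 0)"
    unfolding mat_comp_def using True assms by (intro sum.cong refl) (auto simp: der_mat_def)
  also have "\<dots> = (\<Sum>k\<in>{..<n} \<inter> {j<..<i}. c (i - k) * c' (k - j))"
    by (rule sum.inter_restrict[symmetric]) simp
  also have "{..<n} \<inter> {j<..<i} = {j<..<i}"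
    using True by auto
  finally show ?thesis
    using True by simp
qed (simp add: mat_comp_def der_mat_def)

text \<open>Strictly lower triangular Toeplitz matrices commute: the substitution
  \<open>k \<mapsto> i + j - k\<close> exchanges the two factors in each entry of the product.\<close>

lemma der_mat_comp_commute:
  assumes "c 0 = 0" "c' 0 = 0"
  shows "mat_comp n (der_mat n c) (der_mat n c') = mat_comp n (der_mat n c') (der_mat n c)"
proof (intro ext)
  fix i j
  have "(\<Sum>k\<in>{j<..<i}. c (i - k) * c' (k - j)) = (\<Sum>k\<in>{j<..<i}. c' (i - k) * c (k - j))"
    by (rule sum.reindex_bij_witness[where i="\<lambda>k. i + j - k" and j="\<lambda>k. i + j - k"])
      (auto simp: mult.commute)
  then show "mat_comp n (der_mat n c) (der_mat n c') i j = mat_comp n (der_mat n c') (der_mat n c) i j"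
    using assms by (simp add: mat_comp_der_mat)
qed

lemma bider_br_fst_0_0:
  assumes "2 \<le> n" "x \<in> Bider n" "y \<in> Bider n"
  shows "fst (bider_br n x y) 0 0 = 0"
proof -
  obtain c b c' b' where "x = (der_mat n c, antider_mat n b)" "y = (der_mat n c', antider_mat n b')"
    using assms Bider_eq by blast
  then show ?thesis
    using assms(1) by (simp add: bider_br_def mat_comp_der_mat_0_0 der_mat_col0)
qed

lemma bider_br_fst_eq_0:
  assumes "2 \<le> n" "x \<in> Bider n" "y \<in> Bider n" "fst x 0 0 = 0" "fst y 0 0 = 0"
  shows "fst (bider_br n x y) = 0"
proof -
  obtain c b c' b' where "x = (der_mat n c, antider_mat n b)" "y = (der_mat n c', antider_mat n b')"
    and "c 0 = 0" "c' 0 = 0"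
    using assms Bider_eq[OF assms(1)] by (auto simp: der_mat_col0)
  then show ?thesis
    by (simp add: bider_br_def der_mat_comp_commute)
qed

lemma derived_series_Bider:
  assumes "2 \<le> n"
  shows "derived_series pscale (bider_br n) (Bider n) 3 = {0}"
proof -
  let ?S = "derived_series pscale (bider_br n) (Bider n)"
  have S1: "?S (Suc 0) \<subseteq> {p \<in> Bider n. fst p 0 0 = 0}"
  proof (rule derived_series_Suc_subset[OF V.module_axioms])
    show "V.subspace {p \<in> Bider n. fst p 0 0 = 0}"
      using Bider_subspace[OF assms] by (auto simp: V.subspace_def pscale_def)
  qed (use assms in \<open>simp add: bider_br_closed bider_br_fst_0_0\<close>)
  have S2: "?S (Suc (Suc 0)) \<subseteq> {p. fst p = 0}"
  proof (rule derived_series_Suc_subset[OF V.module_axioms])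
    show "V.subspace {p :: cmat \<times> cmat. fst p = 0}"
      by (auto simp: V.subspace_def pscale_def fun_eq_iff)
  qed (use assms S1 in \<open>auto intro: bider_br_fst_eq_0\<close>)
  have "?S (Suc (Suc (Suc 0))) \<subseteq> {0}"
    by (rule derived_series_Suc_subset[OF V.module_axioms V.subspace_single_0])
      (use S2 in \<open>auto simp: bider_br_def mat_comp_def zero_prod_def fun_eq_iff\<close>)
  then show ?thesis
    using V.span_zero by (auto simp: numeral_eq_Suc)
qed

text \<open>Coordinates on \<open>Bider n\<close>: the first column of \<open>d\<close> (indices \<open>Inl i\<close>) and the first
  column of \<open>D\<close> (indices \<open>Inr j\<close>); its top entry \<open>j = 0\<close> is left out, as it equals \<open>d 0 0\<close>.\<close>

definition bider_coord :: "nat + nat \<Rightarrow> cmat \<times> cmat \<Rightarrow> complex" where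
  "bider_coord s p = (case s of Inl i \<Rightarrow> fst p i 0 | Inr j \<Rightarrow> snd p j 0)"

definition bider_basis :: "nat \<Rightarrow> nat + nat \<Rightarrow> cmat \<times> cmat" where
  "bider_basis n s = (case s of
      Inl i \<Rightarrow> (der_mat n (unitv i), antider_mat n (if i = 0 then unitv 0 else 0))
    | Inr j \<Rightarrow> (der_mat n 0, antider_mat n (unitv j)))"

lemma module_hom_bider_coord: "module_hom pscale (*) (bider_coord s)"
  by unfold_locales (auto simp: bider_coord_def pscale_def algebra_simps split: sum.split)

lemma bider_coord_basis:
  assumes "s \<in> {..<n} <+> {1..<n}" "t \<in> {..<n} <+> {1..<n}"
  shows "bider_coord s (bider_basis n t) = (if s = t then 1 else 0)"
  using assms by (auto simp: bider_coord_def bider_basis_def der_mat_col0 antider_mat_col0 unitv_def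
      split: if_splits)

lemma bider_basis_in_Bider:
  assumes "2 \<le> n" "t \<in> {..<n} <+> {1..<n}"
  shows "bider_basis n t \<in> Bider n"
  using assms by (auto simp: Bider_eq bider_basis_def; force simp: unitv_def)

lemma Bider_eq_0_if_coords_0:
  assumes "2 \<le> n" "p \<in> Bider n" "\<And>s. s \<in> {..<n} <+> {1..<n} \<Longrightarrow> bider_coord s p = 0"
  shows "p = 0"
proof -
  obtain c b where p: "p = (der_mat n c, antider_mat n b)" and bc: "b 0 = c 0"
    using assms(1,2) Bider_eq by blast
  have c: "c i = 0" if "i < n" for i
    using that assms(3)[OF InlI, of i] by (simp add: p bider_coord_def der_mat_col0)
  have "b i = 0" if "i < n" for i
  proof (cases "i = 0")
    case False
    then show ?thesis
      using that assms(3)[OF InrI, of i] by (simp add: p bider_coord_def antider_mat_col0)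
  qed (use bc c that in simp)
  with c show ?thesis
    by (auto simp: p der_mat_def antider_mat_def fun_eq_iff zero_prod_def)
qed

lemma dim_Bider:
  assumes "2 \<le> n"
  shows "V.dim (Bider n) = 2 * n - 1"
proof -
  have "V.dim (Bider n) = card ({..<n} <+> {1..<n})"
  proof (rule V.dim_eq_card_if_biorthogonal[where g="bider_basis n" and \<phi>=bider_coord])
    show "bider_basis n ` ({..<n} <+> {1..<n}) \<subseteq> Bider n"
      using assms bider_basis_in_Bider by blast
    show "p = 0" if "p \<in> Bider n" "\<And>s. s \<in> {..<n} <+> {1..<n} \<Longrightarrow> bider_coord s p = 0" for p
      using Bider_eq_0_if_coords_0[OF assms] that .
  qed (use assms in \<open>simp_all add: Bider_subspace module_hom_bider_coord bider_coord_basis\<close>)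
  also have "\<dots> = 2 * n - 1"
    using assms by (simp add: card_Plus)
  finally show ?thesis .
qed

theorem mainTheorem3:
  fixes n :: nat
  assumes "n \<ge> 2"
  shows "leibniz_algebra_on pscale (bider_br n) (Bider n) \<and>
         solvable_on pscale (bider_br n) (Bider n) \<and>
         vector_space.dim pscale (Bider n) = 2 * n - 1"
  using assms leibniz_algebra_Bider derived_series_Bider dim_Bider
  by (auto simp: solvable_on_def)

end
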